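(* (Operator Hornich-Hlawka inequality.) Let $A,B,C,X$ be $N\times N$ real symmetric positive semidefinite matrices and $p\geq1$ an integer. Then, in the Löwner order on symmetric operators on $(\mathbb{R}^{N})^{\otimes p}$, \[ \otimes^{p}(A+X)+\otimes^{p}(B+X)+\otimes^{p}(C+X)+\otimes^{p}(A+B+C+X)\geq\otimes^{p}(A+B+X)+\otimes^{p}(B+C+X)+\otimes^{p}(C+A+X)+\otimes^{p}X, \] where $\otimes^{p}Y=Y\otimes\cdots\otimes Y$ ($p$ factors, Kronecker/tensor product).
   Context: The Löwner order: $S\leq T$ iff $T-S$ is positive semidefinite. *)

theory Defs
  imports "Jordan_Normal_Form.Matrix"
begin

definition kron :: "real mat \<Rightarrow> real mat \<Rightarrow> real mat" where
  "kron A B = mat (dim_row A * dim_row B) (dim_col A * dim_col B)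
     (\<lambda>(i, j). A $$ (i div dim_row B, j div dim_col B) * B $$ (i mod dim_row B, j mod dim_col B))"

fun tensor_pow :: "nat \<Rightarrow> real mat \<Rightarrow> real mat" where
  "tensor_pow 0 Y = 1\<^sub>m 1"
| "tensor_pow (Suc p) Y = kron (tensor_pow p Y) Y"

definition psd :: "nat \<Rightarrow> real mat \<Rightarrow> bool" where
  "psd n M \<longleftrightarrow> M \<in> carrier_mat n n \<and> M\<^sup>T = M \<and>
     (\<forall>v \<in> carrier_vec n. 0 \<le> v \<bullet> (M *\<^sub>v v))"

definition loewner_le :: "nat \<Rightarrow> real mat \<Rightarrow> real mat \<Rightarrow> bool" where
  "loewner_le n S T \<longleftrightarrow> S \<in> carrier_mat n n \<and> T \<in> carrier_mat n n \<and>
     S\<^sup>T = S \<and> T\<^sup>T = T \<and> psd n (T - S)"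

end

theory Submission
  imports Defs
begin

text \<open>Write \<open>T Y\<close> for \<open>\<otimes>\<^sup>p Y\<close>. The difference of the two sides is the third finite
  difference \<open>\<Delta>\<^sub>A \<Delta>\<^sub>B \<Delta>\<^sub>C T\<close> at \<open>X\<close>. Splitting off the last tensor factor,
  \<open>T\<^sub>p\<^sub>+\<^sub>1 Y = T\<^sub>p Y \<otimes> Y\<close>, each finite difference of \<open>T\<^sub>p\<^sub>+\<^sub>1\<close> becomes a sum of Kronecker
  products of finite differences of \<open>T\<^sub>p\<close> (of the same or lower order) with one of
  \<open>A, B, C\<close> or with \<open>X\<close> plus some of them. Sums and Kronecker products of positive
  semidefinite matrices are positive semidefinite, the latter because a positive
  semidefinite matrix is a Gram matrix \<open>Q\<^sub>i\<^sub>j = \<Sum>\<^sub>r u\<^sub>r(i) u\<^sub>r(j)\<close>; so induction on \<open>p\<close>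
  shows that all these differences are positive semidefinite.\<close>

lemma mult_add_less_mult_nat:
  fixes a b m n :: nat
  assumes "a < m" "b < n"
  shows "a * n + b < m * n"
proof -
  have "a * n + b < Suc a * n" using assms(2) by simp
  also have "\<dots> \<le> m * n" using assms(1) by (intro mult_le_mono1) simp
  finally show ?thesis .
qed

lemma sum_lessThan_mult_nat:
  fixes f :: "nat \<Rightarrow> 'a :: comm_monoid_add"
  shows "(\<Sum>i<m * n. f i) = (\<Sum>a<m. \<Sum>b<n. f (a * n + b))"
proof -
  have "(\<Sum>i<m * n. f i) = (\<Sum>(a, b)\<in>{..<m} \<times> {..<n}. f (a * n + b))"
  proof (rule sum.reindex_bij_witness[where i = "\<lambda>(a, b). a * n + b" and j = "\<lambda>i. (i div n, i mod n)"])
    fix i assume "i \<in> {..<m * n}"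
    then show "(i div n, i mod n) \<in> {..<m} \<times> {..<n}"
      by (cases "n = 0") (auto simp: less_mult_imp_div_less)
  qed (auto simp: mult_add_less_mult_nat)
  then show ?thesis
    by (simp add: sum.cartesian_product)
qed

lemma less_mult_imp_mod_less: "i < k * n \<Longrightarrow> i mod n < (n :: nat)"
  by (cases "n = 0") auto

lemma dim_kron [simp]:
  "dim_row (kron P Q) = dim_row P * dim_row Q" "dim_col (kron P Q) = dim_col P * dim_col Q"
  by (simp_all add: kron_def)

lemma index_kron [simp]:
  "i < dim_row P * dim_row Q \<Longrightarrow> j < dim_col P * dim_col Q \<Longrightarrow>
   kron P Q $$ (i, j) = P $$ (i div dim_row Q, j div dim_col Q) * Q $$ (i mod dim_row Q, j mod dim_col Q)"
  by (simp add: kron_def)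

lemma dim_tensor_pow [simp]:
  "dim_row (tensor_pow p Y) = dim_row Y ^ p" "dim_col (tensor_pow p Y) = dim_col Y ^ p"
  by (induction p) auto

text \<open>Quadratic forms are evaluated on functions \<open>nat \<Rightarrow> real\<close> rather than on \<open>vec n\<close>,
  which makes reindexing over Kronecker products painless.\<close>

definition bilin_form :: "nat \<Rightarrow> real mat \<Rightarrow> (nat \<Rightarrow> real) \<Rightarrow> (nat \<Rightarrow> real) \<Rightarrow> real" where
  "bilin_form n Q f g = (\<Sum>i<n. \<Sum>j<n. f i * Q $$ (i, j) * g j)"

abbreviation quad_form :: "nat \<Rightarrow> real mat \<Rightarrow> (nat \<Rightarrow> real) \<Rightarrow> real" where
  "quad_form n Q f \<equiv> bilin_form n Q f f"

lemma psd_iff_quad_form: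
  "psd n Q \<longleftrightarrow> Q \<in> carrier_mat n n \<and> (\<forall>i<n. \<forall>j<n. Q $$ (i, j) = Q $$ (j, i)) \<and>
     (\<forall>f. 0 \<le> quad_form n Q f)"
proof (cases "Q \<in> carrier_mat n n")
  case True
  have "v \<bullet> (Q *\<^sub>v v) = quad_form n Q (\<lambda>i. v $ i)" if "v \<in> carrier_vec n" for v
    using True that
    by (auto simp: scalar_prod_def bilin_form_def sum_distrib_left atLeast0LessThan mult.assoc
        intro!: sum.cong)
  moreover have "quad_form n Q (\<lambda>i. vec n f $ i) = quad_form n Q f" for f
    by (simp add: bilin_form_def)
  moreover have "Q\<^sup>T = Q \<longleftrightarrow> (\<forall>i<n. \<forall>j<n. Q $$ (i, j) = Q $$ (j, i))"
    using True by (auto simp: mat_eq_iff)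
  ultimately show ?thesis
    using True unfolding psd_def by (metis vec_carrier)
qed (simp add: psd_def)

lemma psd_carrier: "psd n Q \<Longrightarrow> Q \<in> carrier_mat n n"
  by (simp add: psd_def)

lemma psd_symmetric: "psd n Q \<Longrightarrow> i < n \<Longrightarrow> j < n \<Longrightarrow> Q $$ (i, j) = Q $$ (j, i)"
  by (simp add: psd_iff_quad_form)

lemma psd_quad_form_nonneg: "psd n Q \<Longrightarrow> 0 \<le> quad_form n Q f"
  by (simp add: psd_iff_quad_form)

lemma psdI:
  "Q \<in> carrier_mat n n \<Longrightarrow> (\<And>i j. i < n \<Longrightarrow> j < n \<Longrightarrow> Q $$ (i, j) = Q $$ (j, i)) \<Longrightarrow>
   (\<And>f. 0 \<le> quad_form n Q f) \<Longrightarrow> psd n Q"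
  by (simp add: psd_iff_quad_form)

lemma bilin_form_commute: "psd n Q \<Longrightarrow> bilin_form n Q f g = bilin_form n Q g f"
  unfolding bilin_form_def
  by (subst sum.swap) (auto simp: psd_symmetric mult_ac intro!: sum.cong)

lemma quad_form_add_scaled:
  assumes "psd n Q"
  shows "quad_form n Q (\<lambda>i. f i + t * g i) =
    quad_form n Q f + 2 * t * bilin_form n Q f g + t\<^sup>2 * quad_form n Q g"
proof -
  have "quad_form n Q (\<lambda>i. f i + t * g i) =
      quad_form n Q f + t * bilin_form n Q f g + t * bilin_form n Q g f + t\<^sup>2 * quad_form n Q g"
    by (simp add: bilin_form_def algebra_simps sum.distrib sum_distrib_left power2_eq_square)
  then show ?thesis
    using bilin_form_commute[OF assms, of g f] by simp
qed

lemma nonneg_quadratic_discriminant: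
  fixes a b c :: real
  assumes "0 \<le> a" and nonneg: "\<And>t. 0 \<le> a * t\<^sup>2 + 2 * b * t + c"
  shows "b\<^sup>2 \<le> a * c"
proof (cases "a = 0")
  case True
  have "b = 0"
  proof (rule ccontr)
    assume "b \<noteq> 0"
    then have "a * (-(c + 1) / (2 * b))\<^sup>2 + 2 * b * (-(c + 1) / (2 * b)) + c = -1"
      using True by (simp add: field_simps)
    with nonneg[of "-(c + 1) / (2 * b)"] show False
      by linarith
  qed
  with True show ?thesis by simp
next
  case False
  with \<open>0 \<le> a\<close> have "0 < a" by simp
  have "0 \<le> a * (- b / a)\<^sup>2 + 2 * b * (- b / a) + c"
    by (rule nonneg)
  also have "\<dots> = (a * c - b\<^sup>2) / a"
    using False by (simp add: field_simps power2_eq_square)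
  finally show ?thesis
    using \<open>0 < a\<close> by (simp add: zero_le_divide_iff)
qed

lemma psd_cauchy_schwarz:
  assumes "psd n Q"
  shows "(bilin_form n Q f g)\<^sup>2 \<le> quad_form n Q g * quad_form n Q f"
proof (rule nonneg_quadratic_discriminant)
  show "0 \<le> quad_form n Q g"
    using assms by (rule psd_quad_form_nonneg)
  fix t
  have "0 \<le> quad_form n Q (\<lambda>i. f i + t * g i)"
    using assms by (rule psd_quad_form_nonneg)
  then show "0 \<le> quad_form n Q g * t\<^sup>2 + 2 * bilin_form n Q f g * t + quad_form n Q f"
    by (simp add: quad_form_add_scaled[OF assms] algebra_simps)
qed

lemma bilin_form_indicator_right:
  "k < n \<Longrightarrow> bilin_form n Q f (\<lambda>j. of_bool (j = k)) = (\<Sum>i<n. f i * Q $$ (i, k))"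
  by (simp add: bilin_form_def)

lemma bilin_form_indicators:
  "j < n \<Longrightarrow> k < n \<Longrightarrow> bilin_form n Q (\<lambda>i. of_bool (i = j)) (\<lambda>i. of_bool (i = k)) = Q $$ (j, k)"
  by (simp add: bilin_form_indicator_right)

lemma psd_diag_nonneg: "psd n Q \<Longrightarrow> k < n \<Longrightarrow> 0 \<le> Q $$ (k, k)"
  by (metis bilin_form_indicators psd_quad_form_nonneg)

lemma psd_entry_square_le:
  assumes "psd n Q" "j < n" "k < n"
  shows "(Q $$ (j, k))\<^sup>2 \<le> Q $$ (k, k) * Q $$ (j, j)"
  using psd_cauchy_schwarz[OF assms(1), of "\<lambda>i. of_bool (i = j)" "\<lambda>i. of_bool (i = k)"]
  by (simp add: bilin_form_indicators assms)

lemma psd_schur_complement: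
  assumes "psd n Q" "k < n" "0 < Q $$ (k, k)"
  shows "psd n (mat n n (\<lambda>(i, j). Q $$ (i, j) - Q $$ (i, k) * Q $$ (j, k) / Q $$ (k, k)))"
    (is "psd n ?S")
proof (rule psdI)
  show "?S \<in> carrier_mat n n" by simp
  show "?S $$ (i, j) = ?S $$ (j, i)" if "i < n" "j < n" for i j
    using that psd_symmetric[OF assms(1) that] by simp
  fix f
  define s where "s = (\<Sum>i<n. f i * Q $$ (i, k))"
  have S_form: "quad_form n ?S f = quad_form n Q f - s\<^sup>2 / Q $$ (k, k)"
    by (simp add: bilin_form_def s_def algebra_simps sum_subtractf sum_distrib_left
        sum_distrib_right sum_divide_distrib power2_eq_square)
  have "s\<^sup>2 \<le> quad_form n Q f * Q $$ (k, k)"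
    using psd_cauchy_schwarz[OF assms(1), of f "\<lambda>i. of_bool (i = k)"] assms(2)
    by (simp add: s_def bilin_form_indicator_right bilin_form_indicators mult.commute)
  then show "0 \<le> quad_form n ?S f"
    unfolding S_form using assms(3) by (simp add: pos_divide_le_eq)
qed

text \<open>Induction on the number of nonzero diagonal entries: at a pivot \<open>Q\<^sub>k\<^sub>k > 0\<close>, split off
  \<open>u u\<^sup>T\<close> with \<open>u = Q\<^sub>\<bullet>\<^sub>k / \<surd>Q\<^sub>k\<^sub>k\<close>; the remainder is the Schur complement, whose \<open>k\<close>-th diagonal
  entry vanishes and whose other zero diagonal entries stay zero.\<close>

lemma psd_gram_decomposition:
  "psd n Q \<Longrightarrow> \<exists>(R :: nat) u. \<forall>i<n. \<forall>j<n. Q $$ (i, j) = (\<Sum>r<R. u r i * u r j)"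
proof (induction "card {k. k < n \<and> Q $$ (k, k) \<noteq> 0}" arbitrary: Q rule: less_induct)
  case less
  have off_diag_zero: "Q $$ (j, k) = 0" if "j < n" "k < n" "Q $$ (j, j) = 0 \<or> Q $$ (k, k) = 0" for j k
  proof -
    have "(Q $$ (j, k))\<^sup>2 \<le> 0"
      using psd_entry_square_le[OF less.prems that(1,2)] that(3) by (metis mult_zero_left mult_zero_right)
    then show ?thesis by simp
  qed
  show ?case
  proof (cases "\<exists>k<n. Q $$ (k, k) \<noteq> 0")
    case False
    then have "Q $$ (i, j) = 0" if "i < n" "j < n" for i j
      using off_diag_zero that by blast
    then show ?thesis
      by (intro exI[of _ 0]) simp
  next
    case True
    then obtain k where k: "k < n" "Q $$ (k, k) \<noteq> 0" by blast
    with psd_diag_nonneg[OF less.prems] have pos: "0 < Q $$ (k, k)"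
      by (simp add: order_less_le)
    define S where "S = mat n n (\<lambda>(i, j). Q $$ (i, j) - Q $$ (i, k) * Q $$ (j, k) / Q $$ (k, k))"
    have "psd n S"
      unfolding S_def using less.prems k(1) pos by (rule psd_schur_complement)
    have "{j. j < n \<and> S $$ (j, j) \<noteq> 0} \<subset> {j. j < n \<and> Q $$ (j, j) \<noteq> 0}"
    proof
      show "{j. j < n \<and> S $$ (j, j) \<noteq> 0} \<subseteq> {j. j < n \<and> Q $$ (j, j) \<noteq> 0}"
      proof clarify
        fix j assume "j < n" "S $$ (j, j) \<noteq> 0" "Q $$ (j, j) = 0"
        then have "Q $$ (j, k) = 0"
          using off_diag_zero[OF \<open>j < n\<close> k(1)] by blast
        with \<open>j < n\<close> \<open>S $$ (j, j) \<noteq> 0\<close> \<open>Q $$ (j, j) = 0\<close> show False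
          by (simp add: S_def)
      qed
      show "{j. j < n \<and> S $$ (j, j) \<noteq> 0} \<noteq> {j. j < n \<and> Q $$ (j, j) \<noteq> 0}"
      proof -
        have "S $$ (k, k) = 0"
          using k(1) pos by (simp add: S_def power2_eq_square)
        with k show ?thesis by blast
      qed
    qed
    then have "card {j. j < n \<and> S $$ (j, j) \<noteq> 0} < card {j. j < n \<and> Q $$ (j, j) \<noteq> 0}"
      by (simp add: psubset_card_mono)
    from less.hyps[OF this \<open>psd n S\<close>] obtain R :: nat and w
      where w: "\<forall>i<n. \<forall>j<n. S $$ (i, j) = (\<Sum>r<R. w r i * w r j)" by blast
    define u where "u i = Q $$ (i, k) / sqrt (Q $$ (k, k))" for i
    have "Q $$ (i, j) = (\<Sum>r<Suc R. case_nat u w r i * case_nat u w r j)" if "i < n" "j < n" for i j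
    proof -
      have "(\<Sum>r<Suc R. case_nat u w r i * case_nat u w r j) = u i * u j + S $$ (i, j)"
        using that w by (simp only: sum.lessThan_Suc_shift) simp
      also have "\<dots> = Q $$ (i, j)"
        using that pos by (simp add: S_def u_def)
      finally show ?thesis ..
    qed
    then show ?thesis by (intro exI[of _ "Suc R"] exI[of _ "case_nat u w"]) blast
  qed
qed

lemma bilin_form_gram:
  assumes "\<And>i j. i < n \<Longrightarrow> j < n \<Longrightarrow> Q $$ (i, j) = (\<Sum>r<R. u r i * u r j)"
  shows "bilin_form n Q f g = (\<Sum>r<R. (\<Sum>i<n. f i * u r i) * (\<Sum>j<n. g j * u r j))"
proof -
  have "(\<Sum>r<R. (\<Sum>i<n. f i * u r i) * (\<Sum>j<n. g j * u r j)) =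
      (\<Sum>r<R. \<Sum>i<n. \<Sum>j<n. f i * u r i * (g j * u r j))"
    by (simp add: sum_product)
  also have "\<dots> = (\<Sum>i<n. \<Sum>j<n. \<Sum>r<R. f i * u r i * (g j * u r j))"
    by (simp add: sum.swap[of _ "{..<R}"])
  also have "\<dots> = bilin_form n Q f g"
    by (simp add: bilin_form_def assms sum_distrib_left sum_distrib_right mult_ac)
  finally show ?thesis ..
qed

lemma quad_form_kron:
  assumes "P \<in> carrier_mat m m" "Q \<in> carrier_mat n n"
  shows "quad_form (m * n) (kron P Q) v =
    (\<Sum>a<m. \<Sum>c<m. P $$ (a, c) * bilin_form n Q (\<lambda>b. v (a * n + b)) (\<lambda>d. v (c * n + d)))"
proof -
  have kron_entry: "kron P Q $$ (a * n + b, c * n + d) = P $$ (a, c) * Q $$ (b, d)"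
    if "a < m" "b < n" "c < m" "d < n" for a b c d
    using assms that by (simp add: mult_add_less_mult_nat)
  have "quad_form (m * n) (kron P Q) v =
      (\<Sum>a<m. \<Sum>b<n. \<Sum>c<m. \<Sum>d<n. v (a * n + b) * (P $$ (a, c) * Q $$ (b, d)) * v (c * n + d))"
    by (simp add: bilin_form_def sum_lessThan_mult_nat kron_entry)
  also have "\<dots> = (\<Sum>a<m. \<Sum>c<m. \<Sum>b<n. \<Sum>d<n. v (a * n + b) * (P $$ (a, c) * Q $$ (b, d)) * v (c * n + d))"
    by (rule sum.cong[OF refl], rule sum.swap)
  also have "\<dots> = (\<Sum>a<m. \<Sum>c<m. P $$ (a, c) * bilin_form n Q (\<lambda>b. v (a * n + b)) (\<lambda>d. v (c * n + d)))"
    by (simp add: bilin_form_def sum_distrib_left mult_ac)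
  finally show ?thesis .
qed

lemma psd_kron:
  assumes P: "psd m P" and Q: "psd n Q"
  shows "psd (m * n) (kron P Q)"
proof (rule psdI)
  have dims: "dim_row P = m" "dim_col P = m" "dim_row Q = n" "dim_col Q = n"
    using psd_carrier[OF P] psd_carrier[OF Q] by auto
  show "kron P Q \<in> carrier_mat (m * n) (m * n)"
    by (simp add: carrier_matI dims)
  show "kron P Q $$ (i, j) = kron P Q $$ (j, i)" if "i < m * n" "j < m * n" for i j
  proof -
    have "0 < n" using that by (cases n) auto
    then show ?thesis
      using that psd_symmetric[OF P, of "i div n" "j div n"] psd_symmetric[OF Q, of "i mod n" "j mod n"]
      by (simp add: dims less_mult_imp_div_less)
  qed
  fix v
  obtain R :: nat and u where u: "\<forall>i<n. \<forall>j<n. Q $$ (i, j) = (\<Sum>r<R. u r i * u r j)"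
    using psd_gram_decomposition[OF Q] by blast
  define y where "y r a = (\<Sum>b<n. v (a * n + b) * u r b)" for r a
  have "quad_form (m * n) (kron P Q) v = (\<Sum>a<m. \<Sum>c<m. P $$ (a, c) * (\<Sum>r<R. y r a * y r c))"
    using psd_carrier[OF P] psd_carrier[OF Q]
    by (simp add: quad_form_kron bilin_form_gram[where R = R and u = u] u y_def)
  also have "\<dots> = (\<Sum>r<R. quad_form m P (y r))"
    by (simp add: bilin_form_def sum_distrib_left mult_ac sum.swap[of _ "{..<R}"])
  finally show "0 \<le> quad_form (m * n) (kron P Q) v"
    by (simp add: sum_nonneg psd_quad_form_nonneg[OF P])
qed

lemma bilin_form_add:
  "P \<in> carrier_mat n n \<Longrightarrow> Q \<in> carrier_mat n n \<Longrightarrow>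
   bilin_form n (P + Q) f g = bilin_form n P f g + bilin_form n Q f g"
  by (simp add: bilin_form_def algebra_simps sum.distrib)

lemma psd_add:
  assumes P: "psd n P" and Q: "psd n Q"
  shows "psd n (P + Q)"
proof (rule psdI)
  have carrier: "P \<in> carrier_mat n n" "Q \<in> carrier_mat n n"
    using P Q by (simp_all add: psd_carrier)
  then show "P + Q \<in> carrier_mat n n" by simp
  show "(P + Q) $$ (i, j) = (P + Q) $$ (j, i)" if "i < n" "j < n" for i j
    using that carrier psd_symmetric[OF P that] psd_symmetric[OF Q that] by simp
  show "0 \<le> quad_form n (P + Q) f" for f
    using carrier psd_quad_form_nonneg[OF P, of f] psd_quad_form_nonneg[OF Q, of f]
    by (simp add: bilin_form_add)
qed

lemma psd_zero: "psd n (0\<^sub>m n n)"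
  by (simp add: psd_iff_quad_form bilin_form_def)

lemma psd_one: "psd n (1\<^sub>m n)"
proof (rule psdI)
  fix f
  have "quad_form n (1\<^sub>m n) f = (\<Sum>i<n. f i * f i)"
    by (simp add: bilin_form_def of_bool_def if_distrib if_distribR cong: if_cong)
  then show "0 \<le> quad_form n (1\<^sub>m n) f"
    by (simp add: sum_nonneg)
qed auto

lemma psd_tensor_pow:
  assumes "psd N Y"
  shows "psd (N ^ p) (tensor_pow p Y)"
proof (induction p)
  case 0
  show ?case by (simp add: psd_one)
next
  case (Suc p)
  show ?case
    using psd_kron[OF Suc.IH assms] by (simp add: mult.commute)
qed

text \<open>The first, second and third finite differences of \<open>Y \<mapsto> tensor_pow p Y\<close> at \<open>X\<close>,
  written recursively so that each is visibly a sum of Kronecker products of positive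
  semidefinite matrices.\<close>

fun tensor_pow_diff :: "nat \<Rightarrow> real mat \<Rightarrow> real mat \<Rightarrow> real mat" where
  "tensor_pow_diff 0 X A = 0\<^sub>m 1 1"
| "tensor_pow_diff (Suc p) X A = kron (tensor_pow_diff p X A) (A + X) + kron (tensor_pow p X) A"

fun tensor_pow_diff2 :: "nat \<Rightarrow> real mat \<Rightarrow> real mat \<Rightarrow> real mat \<Rightarrow> real mat" where
  "tensor_pow_diff2 0 X A B = 0\<^sub>m 1 1"
| "tensor_pow_diff2 (Suc p) X A B = kron (tensor_pow_diff2 p X A B) (A + B + X)
     + kron (tensor_pow_diff p X A) B + kron (tensor_pow_diff p X B) A"

fun tensor_pow_diff3 :: "nat \<Rightarrow> real mat \<Rightarrow> real mat \<Rightarrow> real mat \<Rightarrow> real mat \<Rightarrow> real mat" where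
  "tensor_pow_diff3 0 X A B C = 0\<^sub>m 1 1"
| "tensor_pow_diff3 (Suc p) X A B C = kron (tensor_pow_diff3 p X A B C) (A + B + C + X)
     + kron (tensor_pow_diff2 p X A B) C + kron (tensor_pow_diff2 p X B C) A
     + kron (tensor_pow_diff2 p X C A) B"

lemma tensor_pow_diff_eq:
  assumes "A \<in> carrier_mat N N" "X \<in> carrier_mat N N"
  shows "tensor_pow_diff p X A = tensor_pow p (A + X) - tensor_pow p X"
proof (induction p)
  case 0
  show ?case by (rule eq_matI) simp_all
next
  case (Suc p)
  show ?case
    by (rule eq_matI) (use assms in \<open>auto simp: Suc.IH algebra_simps less_mult_imp_div_less less_mult_imp_mod_less
      simp del: power_Suc simp add: power_Suc2\<close>)
qed

lemma tensor_pow_diff2_eq: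
  assumes "A \<in> carrier_mat N N" "B \<in> carrier_mat N N" "X \<in> carrier_mat N N"
  shows "tensor_pow_diff2 p X A B =
    tensor_pow p (A + B + X) - tensor_pow p (A + X) - tensor_pow p (B + X) + tensor_pow p X"
proof (induction p)
  case 0
  show ?case by (rule eq_matI) simp_all
next
  case (Suc p)
  show ?case
    by (rule eq_matI)
      (use assms in \<open>auto simp: Suc.IH tensor_pow_diff_eq[OF assms(1,3)] tensor_pow_diff_eq[OF assms(2,3)]
        algebra_simps less_mult_imp_div_less less_mult_imp_mod_less simp del: power_Suc simp add: power_Suc2\<close>)
qed

lemma tensor_pow_diff3_eq:
  assumes "A \<in> carrier_mat N N" "B \<in> carrier_mat N N" "C \<in> carrier_mat N N" "X \<in> carrier_mat N N"
  shows "tensor_pow_diff3 p X A B C =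
    (tensor_pow p (A + X) + tensor_pow p (B + X) + tensor_pow p (C + X) + tensor_pow p (A + B + C + X)) -
    (tensor_pow p (A + B + X) + tensor_pow p (B + C + X) + tensor_pow p (C + A + X) + tensor_pow p X)"
proof (induction p)
  case 0
  show ?case by (rule eq_matI) simp_all
next
  case (Suc p)
  show ?case
    by (rule eq_matI)
      (use assms in \<open>auto simp: Suc.IH tensor_pow_diff2_eq[OF assms(1,2,4)]
        tensor_pow_diff2_eq[OF assms(2,3,4)] tensor_pow_diff2_eq[OF assms(3,1,4)]
        algebra_simps less_mult_imp_div_less less_mult_imp_mod_less simp del: power_Suc simp add: power_Suc2\<close>)
qed

lemma psd_tensor_pow_diff:
  assumes "psd N X" "psd N A"
  shows "psd (N ^ p) (tensor_pow_diff p X A)"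
proof (induction p)
  case 0
  show ?case by (simp add: psd_zero)
next
  case (Suc p)
  have "psd (N ^ p * N) (kron (tensor_pow_diff p X A) (A + X) + kron (tensor_pow p X) A)"
    by (intro psd_add psd_kron Suc.IH psd_tensor_pow assms)
  then show ?case by (simp add: mult.commute)
qed

lemma psd_tensor_pow_diff2:
  assumes "psd N X" "psd N A" "psd N B"
  shows "psd (N ^ p) (tensor_pow_diff2 p X A B)"
proof (induction p)
  case 0
  show ?case by (simp add: psd_zero)
next
  case (Suc p)
  have "psd (N ^ p * N) (kron (tensor_pow_diff2 p X A B) (A + B + X)
      + kron (tensor_pow_diff p X A) B + kron (tensor_pow_diff p X B) A)"
    by (intro psd_add psd_kron Suc.IH psd_tensor_pow_diff assms)
  then show ?case by (simp add: mult.commute)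
qed

lemma psd_tensor_pow_diff3:
  assumes "psd N X" "psd N A" "psd N B" "psd N C"
  shows "psd (N ^ p) (tensor_pow_diff3 p X A B C)"
proof (induction p)
  case 0
  show ?case by (simp add: psd_zero)
next
  case (Suc p)
  have "psd (N ^ p * N) (kron (tensor_pow_diff3 p X A B C) (A + B + C + X)
      + kron (tensor_pow_diff2 p X A B) C + kron (tensor_pow_diff2 p X B C) A
      + kron (tensor_pow_diff2 p X C A) B)"
    by (intro psd_add psd_kron Suc.IH psd_tensor_pow_diff2 assms)
  then show ?case by (simp add: mult.commute)
qed

lemma psd_hornich_hlawka_difference:
  assumes "psd N A" "psd N B" "psd N C" "psd N X"
  shows "psd (N ^ p)
    ((tensor_pow p (A + X) + tensor_pow p (B + X) + tensor_pow p (C + X) + tensor_pow p (A + B + C + X)) -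
     (tensor_pow p (A + B + X) + tensor_pow p (B + C + X) + tensor_pow p (C + A + X) + tensor_pow p X))"
  using psd_tensor_pow_diff3[OF assms(4,1-3), of p]
  by (simp add: tensor_pow_diff3_eq[OF assms[THEN psd_carrier]])

lemma loewner_leI: "psd n S \<Longrightarrow> psd n T \<Longrightarrow> psd n (T - S) \<Longrightarrow> loewner_le n S T"
  by (simp add: loewner_le_def psd_def)

theorem theorem5p8:
  fixes A B C X :: "real mat" and N p :: nat
  assumes "psd N A" and "psd N B" and "psd N C" and "psd N X"
    and "p \<ge> 1"
  shows "loewner_le (N ^ p)
     (tensor_pow p (A + B + X) + tensor_pow p (B + C + X) + tensor_pow p (C + A + X) + tensor_pow p X)
     (tensor_pow p (A + X) + tensor_pow p (B + X) + tensor_pow p (C + X) + tensor_pow p (A + B + C + X))"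
  by (intro loewner_leI psd_hornich_hlawka_difference psd_add psd_tensor_pow assms(1-4))

end
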